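(* Under the hypotheses of the following setting, for every admissible $(\bar s,\bar D)\in[s_{\min},s_\mathrm{in})\times[D_{\min},D_{\max}]$ one has $$\bar D=\mu(\bar s)\quad\text{if and only if}\quad s_\mathrm{eq}(\bar s,\bar D)=\bar s.$$ Setting: $s_\mathrm{in}>0$, $0<s_{\min}<s_\mathrm{in}$, $0<D_{\min}<D_{\max}$, $G_1>0$; $\mu:[0,s_\mathrm{in}]\to[0,\infty)$ is continuously differentiable with $\mu(0)=0$, $\mu(s)>0$ for $s>0$, $D_{\min}<\mu(s)$ for all $s\in[s_{\min},s_\mathrm{in}]$, $D_{\max}>\mu(s)$ for all $s\in[0,s_\mathrm{in}]$; and $G_1>-\min_{[0,s_\mathrm{in}]}\mu'$ and $G_1>-(\mu(s_\mathrm{in})-\bar D)/(s_\mathrm{in}-\bar s)$.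
   Context: $s_\mathrm{eq}(\bar s,\bar D)=\lim_{t\to\infty}s(t)$, where $(s,b)$ solves the closed-loop system $\dot s=-\mu(s)b+D(s_\mathrm{in}-s)$, $\dot b=\mu(s)b-Db$ with $D=\operatorname{sat}_{[D_{\min},D_{\max}]}(\bar D-G_1(s-\bar s))$ from any initial condition in $[0,s_\mathrm{in})\times(0,\infty)$ (this limit exists and is independent of the initial condition under the stated hypotheses). The saturation function is $\operatorname{sat}_{[D_{\min},D_{\max}]}(x)=D_{\max}$ if $x>D_{\max}$, $=x$ if $x\in[D_{\min},D_{\max}]$, $=D_{\min}$ if $x<D_{\min}$. *)

theory Defs
  imports "HOL-Analysis.Analysis"
begin

definition sat :: "real \<Rightarrow> real \<Rightarrow> real \<Rightarrow> real" where
  "sat Dmin Dmax x = (if x > Dmax then Dmax else if x < Dmin then Dmin else x)"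

definition feedback :: "real \<Rightarrow> real \<Rightarrow> real \<Rightarrow> real \<Rightarrow> real \<Rightarrow> real \<Rightarrow> real" where
  "feedback Dmin Dmax G1 sbar Dbar s = sat Dmin Dmax (Dbar - G1 * (s - sbar))"

definition closed_loop_sol ::
  "(real \<Rightarrow> real) \<Rightarrow> real \<Rightarrow> real \<Rightarrow> real \<Rightarrow> real \<Rightarrow> real \<Rightarrow> real
     \<Rightarrow> (real \<Rightarrow> real) \<Rightarrow> (real \<Rightarrow> real) \<Rightarrow> bool" where
  "closed_loop_sol mu s_in Dmin Dmax G1 sbar Dbar s b \<longleftrightarrow>
     0 \<le> s 0 \<and> s 0 < s_in \<and> 0 < b 0 \<and>
     (\<forall>t\<ge>0. (s has_real_derivative
                 (- mu (s t) * b t + feedback Dmin Dmax G1 sbar Dbar (s t) * (s_in - s t)))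
               (at t within {0..})) \<and>
     (\<forall>t\<ge>0. (b has_real_derivative
                 (mu (s t) * b t - feedback Dmin Dmax G1 sbar Dbar (s t) * b t))
               (at t within {0..}))"

end

theory Submission
  imports Defs "HOL-Real_Asymp.Real_Asymp"
begin

(*
  We show invariance of
      [0,s_in) x (0,oo), exponential decay of the excess mass s + b - s_in, and then:
      if D > mu strictly left of a point sigma and D < mu strictly right of it, s converges to
      sigma; conversely every interior limit sigma of s satisfies D(sigma) = mu(sigma).
  (3) For the feedback law, G1 > -min mu' makes mu(x) + G1 x strictly increasing, so when
      Dbar = mu(sbar) the point sbar is such a sign-changing crossing; and D(sbar) = Dbar.
      The main theorem combines both directions.
*)

lemma unbounded_of_deriv_ge:
  fixes f f' :: "real \<Rightarrow> real"
  assumes deriv: "\<And>t. T \<le> t \<Longrightarrow> (f has_real_derivative f' t) (at t)"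
    and rate: "\<And>t. T \<le> t \<Longrightarrow> c \<le> f' t" and c: "0 < c"
  shows "\<not> (\<forall>t\<ge>T. f t \<le> B)"
proof
  assume bounded: "\<forall>t\<ge>T. f t \<le> B"
  define t where "t = T + \<bar>B - f T\<bar> / c + 1"
  have tT: "T \<le> t" using c unfolding t_def by simp
  have "f T - c * T \<le> f t - c * t"
    using DERIV_nonneg_imp_nondecreasing[OF tT, of "\<lambda>x. f x - c * x"] deriv rate
    by (force intro!: derivative_eq_intros)
  moreover have "c * (t - T) = \<bar>B - f T\<bar> + c" using c unfolding t_def by (simp add: field_simps)
  ultimately have "f t > B" using c by (simp add: algebra_simps)
  then show False using bounded tT by force
qed

lemma deriv_limit_zero_if_bounded:
  fixes f f' :: "real \<Rightarrow> real"
  assumes deriv: "\<And>t. T \<le> t \<Longrightarrow> (f has_real_derivative f' t) (at t)"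
    and lim: "(f' \<longlongrightarrow> L) at_top"
    and bounded: "\<And>t. T \<le> t \<Longrightarrow> \<bar>f t\<bar> \<le> B"
  shows "L = 0"
proof (rule ccontr)
  assume "L \<noteq> 0"
  then consider "L > 0" | "L < 0" by linarith
  then show False
  proof cases
    case 1
    have "eventually (\<lambda>t. L / 2 < f' t \<and> T \<le> t) at_top"
      using eventually_conj[OF order_tendstoD(1)[OF lim, of "L / 2"] eventually_ge_at_top[of T]] 1 by simp
    then obtain T' where T': "\<And>t. T' \<le> t \<Longrightarrow> L / 2 < f' t \<and> T \<le> t"
      by (auto simp: eventually_at_top_linorder)
    have "\<forall>t\<ge>T'. f t \<le> B" using T' bounded by (meson abs_le_D1)
    moreover have "\<not> (\<forall>t\<ge>T'. f t \<le> B)"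
      by (rule unbounded_of_deriv_ge[of T' f f' "L / 2"]) (use T' deriv 1 in \<open>auto intro: less_imp_le\<close>)
    ultimately show False by blast
  next
    case 2
    have "eventually (\<lambda>t. f' t < L / 2 \<and> T \<le> t) at_top"
      using eventually_conj[OF order_tendstoD(2)[OF lim, of "L / 2"] eventually_ge_at_top[of T]] 2 by simp
    then obtain T' where T': "\<And>t. T' \<le> t \<Longrightarrow> f' t < L / 2 \<and> T \<le> t"
      by (auto simp: eventually_at_top_linorder)
    have "\<forall>t\<ge>T'. - f t \<le> B" using T' bounded by (meson abs_le_D2)
    moreover have "\<not> (\<forall>t\<ge>T'. - f t \<le> B)"
      by (rule unbounded_of_deriv_ge[of T' _ "\<lambda>t. - f' t" "- L / 2"])
        (use T' deriv 2 in \<open>auto intro!: derivative_eq_intros less_imp_le\<close>)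
    ultimately show False by blast
  qed
qed

lemma first_hit:
  fixes f :: "real \<Rightarrow> real"
  assumes cont: "continuous_on {t0..t1} f" and "f t0 < c" "c \<le> f t1" "t0 \<le> t1"
  shows "\<exists>m. t0 < m \<and> m \<le> t1 \<and> f m = c \<and> (\<forall>t. t0 \<le> t \<and> t < m \<longrightarrow> f t < c)"
proof -
  define S where "S = {x \<in> {t0..t1}. c \<le> f x}"
  have closed: "closed S" unfolding S_def
    by (rule continuous_on_closed_Collect_le) (auto intro: cont continuous_on_const)
  have ne: "S \<noteq> {}" and bdd: "bdd_below S"
    using assms unfolding S_def by (auto intro: bdd_belowI[of _ t0])
  define m where "m = Inf S"
  have mS: "m \<in> S" unfolding m_def using closed_contains_Inf[OF ne bdd closed] .
  have below: "\<forall>t. t0 \<le> t \<and> t < m \<longrightarrow> f t < c"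
  proof (intro allI impI)
    fix t assume t: "t0 \<le> t \<and> t < m"
    then have "t \<le> t1" using mS unfolding S_def by auto
    then show "f t < c" using t cInf_lower[OF _ bdd, of t] unfolding m_def S_def by force
  qed
  have m: "t0 < m" "m \<le> t1" "c \<le> f m"
    using mS assms(2) unfolding S_def by (auto simp: order.order_iff_strict)
  have "f m \<le> c"
  proof (rule ccontr)
    assume "\<not> f m \<le> c"
    then obtain x where "t0 \<le> x" "x \<le> m" "f x = c"
      using IVT'[of f t0 c m] continuous_on_subset[OF cont] m assms(2) by fastforce
    then show False using below \<open>\<not> f m \<le> c\<close> by (cases "x = m") auto
  qed
  then show ?thesis using m below by (intro exI[of _ m]) auto
qed

lemma barrier_up:
  fixes f f' :: "real \<Rightarrow> real"
  assumes deriv: "\<And>t. t0 < t \<Longrightarrow> (f has_real_derivative f' t) (at t)"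
    and cont: "continuous_on {t0..} f"
    and band: "\<And>t. t0 < t \<Longrightarrow> a < f t \<Longrightarrow> f t < a' \<Longrightarrow> f' t < 0"
    and "f t0 \<le> a" "a < a'" "t0 \<le> t1"
  shows "f t1 \<le> a"
proof (rule ccontr)
  assume "\<not> f t1 \<le> a"
  define c where "c = min (f t1) ((a + a') / 2)"
  have c: "a < c" "c < a'" "c \<le> f t1" using \<open>\<not> f t1 \<le> a\<close> assms(5) unfolding c_def by (auto simp: min_def)
  obtain m where m: "t0 < m" "m \<le> t1" "f m = c" "\<forall>t. t0 \<le> t \<and> t < m \<longrightarrow> f t < c"
    using first_hit[OF continuous_on_subset[OF cont] _ c(3) assms(6)] c assms(4) by force
  have "f' m < 0" using band m c by auto
  from DERIV_neg_dec_left[OF deriv[OF m(1)] this] obtain d where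
    d: "d > 0" "\<forall>h>0. h < d \<longrightarrow> f m < f (m - h)" by blast
  define h where "h = min (d / 2) (m - t0)"
  have "f m < f (m - h)" using d m unfolding h_def by auto
  moreover have "t0 \<le> m - h" "m - h < m" using d m unfolding h_def by auto
  ultimately show False using m by force
qed

lemma barrier_low:
  fixes f f' :: "real \<Rightarrow> real"
  assumes "\<And>t. t0 < t \<Longrightarrow> (f has_real_derivative f' t) (at t)"
    and "continuous_on {t0..} f"
    and "\<And>t. t0 < t \<Longrightarrow> a' < f t \<Longrightarrow> f t < a \<Longrightarrow> 0 < f' t"
    and "a \<le> f t0" "a' < a" "t0 \<le> t1"
  shows "a \<le> f t1"
proof -
  have "- f t1 \<le> - a"
    using barrier_up[where f = "\<lambda>t. - f t" and f' = "\<lambda>t. - f' t" and a' = "- a'" and a = "- a"]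
      assms by (auto intro!: derivative_eq_intros continuous_intros)
  then show ?thesis by simp
qed

lemma first_exit_induction:
  fixes P :: "real \<Rightarrow> bool"
  assumes closing: "\<And>t. 0 \<le> t \<Longrightarrow> (\<And>x. 0 \<le> x \<Longrightarrow> x < t \<Longrightarrow> P x) \<Longrightarrow> P t"
    and extending: "\<And>t. 0 \<le> t \<Longrightarrow> P t \<Longrightarrow> eventually P (at_right t)"
    and "0 \<le> t"
  shows "P t"
proof (rule ccontr)
  assume "\<not> P t"
  define A where "A = {x. 0 \<le> x \<and> \<not> P x}"
  have ne: "A \<noteq> {}" and bdd: "bdd_below A"
    using \<open>\<not> P t\<close> \<open>0 \<le> t\<close> unfolding A_def by (auto intro: bdd_belowI[of _ 0])
  define t1 where "t1 = Inf A"
  have t1_nonneg: "0 \<le> t1" unfolding t1_def using ne by (intro cInf_greatest) (auto simp: A_def)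
  have before: "P x" if "0 \<le> x" "x < t1" for x
    using that cInf_lower[OF _ bdd, of x] unfolding t1_def A_def by force
  have "P t1" using closing[OF t1_nonneg before] .
  then obtain u where u: "t1 < u" "\<And>y. t1 < y \<Longrightarrow> y < u \<Longrightarrow> P y"
    using extending[OF t1_nonneg] eventually_at_right[of t1 "t1 + 1"] by auto
  obtain a where a: "a \<in> A" "a < u" using cInf_less_iff[OF ne bdd] u(1) unfolding t1_def by auto
  have "t1 \<le> a" unfolding t1_def using cInf_lower[OF a(1) bdd] .
  then show False using a u \<open>P t1\<close> unfolding A_def by (cases "a = t1") auto
qed

lemma compact_pos_uniform:
  fixes f :: "'a::topological_space \<Rightarrow> real"
  assumes "compact K" "continuous_on K f" "\<And>x. x \<in> K \<Longrightarrow> 0 < f x"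
  shows "\<exists>d>0. \<forall>x\<in>K. d \<le> f x"
proof (cases "K = {}")
  case False
  then obtain x0 where "x0 \<in> K" "\<forall>y\<in>K. f x0 \<le> f y"
    using continuous_attains_inf[OF assms(1) _ assms(2)] by blast
  then show ?thesis using assms(3) by blast
qed (auto intro: exI[of _ 1])

section \<open>The chemostat with a bounded continuous dilution law\<close>

locale chemostat =
  fixes mu D :: "real \<Rightarrow> real" and s_in Dmin Dmax :: real and s b :: "real \<Rightarrow> real"
  assumes s_in_pos: "0 < s_in"
    and mu_cont: "continuous_on {0..s_in} mu"
    and mu_nonneg: "\<And>x. 0 \<le> x \<Longrightarrow> x \<le> s_in \<Longrightarrow> 0 \<le> mu x"
    and mu_0: "mu 0 = 0"
    and mu_s_in_pos: "0 < mu s_in"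
    and D_cont: "continuous_on {0..s_in} D"
    and Dmin_pos: "0 < Dmin"
    and D_lower: "\<And>x. Dmin \<le> D x"
    and D_upper: "\<And>x. D x \<le> Dmax"
    and initial: "0 \<le> s 0" "s 0 < s_in" "0 < b 0"
    and s_deriv: "\<And>t. 0 \<le> t \<Longrightarrow>
      (s has_real_derivative - mu (s t) * b t + D (s t) * (s_in - s t)) (at t within {0..})"
    and b_deriv: "\<And>t. 0 \<le> t \<Longrightarrow>
      (b has_real_derivative mu (s t) * b t - D (s t) * b t) (at t within {0..})"
begin

text \<open>The excess of the total mass over the inflow concentration; it obeys \<open>w' = - D(s) w\<close>.\<close>
definition excess :: "real \<Rightarrow> real" where
  "excess t = s t + b t - s_in"

definition s_rate :: "real \<Rightarrow> real" where
  "s_rate t = - mu (s t) * b t + D (s t) * (s_in - s t)"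

lemma s_rate_excess: "s_rate t = (D (s t) - mu (s t)) * (s_in - s t) - mu (s t) * excess t"
  unfolding s_rate_def excess_def by (simp add: algebra_simps)

lemma s_deriv_at: "0 < t \<Longrightarrow> (s has_real_derivative s_rate t) (at t)"
  unfolding s_rate_def
  by (metis s_deriv at_within_interior interior_real_atLeast greaterThan_iff less_imp_le)

lemma b_deriv_at: "0 < t \<Longrightarrow> (b has_real_derivative mu (s t) * b t - D (s t) * b t) (at t)"
  by (metis b_deriv at_within_interior interior_real_atLeast greaterThan_iff less_imp_le)

lemma s_cont: "continuous_on {0..} s"
  using s_deriv by (intro DERIV_continuous_on) auto

lemma b_cont: "continuous_on {0..} b"
  using b_deriv by (intro DERIV_continuous_on) auto

lemma mu_bounded: "\<exists>M>0. \<forall>x\<in>{0..s_in}. mu x \<le> M"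
proof -
  obtain M where "\<forall>x\<in>{0..s_in}. norm (mu x) \<le> M"
    using compact_imp_bounded[OF compact_continuous_image[OF mu_cont compact_Icc]]
    by (auto simp: bounded_iff)
  then show ?thesis by (intro exI[of _ "max M 1"]) force
qed

subsection \<open>Invariance of the physical region\<close>

text \<open>While the state is physical, the washout rate is at most \<open>Dmax\<close>, so
  \<open>b(t) e^{Dmax t}\<close> does not decrease.\<close>
lemma b_growth_bound:
  assumes "0 \<le> t" and inside: "\<And>x. 0 < x \<Longrightarrow> x < t \<Longrightarrow> 0 \<le> s x \<and> s x \<le> s_in \<and> 0 \<le> b x"
  shows "b 0 \<le> b t * exp (Dmax * t)"
proof -
  have "b 0 * exp (Dmax * 0) \<le> b t * exp (Dmax * t)"
  proof (rule DERIV_nonneg_imp_increasing_open[OF \<open>0 \<le> t\<close>])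
    fix x assume x: "0 < x" "x < t"
    have "((\<lambda>t. b t * exp (Dmax * t)) has_real_derivative
        (mu (s x) + (Dmax - D (s x))) * b x * exp (Dmax * x)) (at x)"
      using b_deriv_at[OF x(1)] by (auto intro!: derivative_eq_intros simp: algebra_simps)
    moreover have "0 \<le> (mu (s x) + (Dmax - D (s x))) * b x * exp (Dmax * x)"
      using inside[OF x] mu_nonneg D_upper[of "s x"] by simp
    ultimately show "\<exists>y. ((\<lambda>t. b t * exp (Dmax * t)) has_real_derivative y) (at x) \<and> 0 \<le> y"
      by blast
  next
    show "continuous_on {0..t} (\<lambda>t. b t * exp (Dmax * t))"
      using continuous_on_subset[OF b_cont] by (auto intro!: continuous_intros)
  qed
  then show ?thesis by simp
qed

text \<open>If the state was physical before time \<open>t\<close>, it is physical at \<open>t\<close>: the bounds are kept in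
  the limit, \<open>b\<close> cannot reach zero by \<open>b_growth_bound\<close>, and \<open>s = s_in\<close> would force
  \<open>s' = - mu(s_in) b < 0\<close>, i.e. \<open>s > s_in\<close> just before.\<close>
lemma state_closed:
  assumes "0 \<le> t" and before: "\<And>x. 0 \<le> x \<Longrightarrow> x < t \<Longrightarrow> 0 \<le> s x \<and> s x < s_in \<and> 0 < b x"
  shows "0 \<le> s t \<and> s t < s_in \<and> 0 < b t"
proof (cases "t = 0")
  case False
  then have t: "0 < t" using \<open>0 \<le> t\<close> by simp
  have left: "eventually (\<lambda>x. 0 \<le> s x \<and> s x < s_in) (at_left t)"
    using eventually_at_left_real[OF t] by eventually_elim (use before in auto)
  have lim: "(s \<longlongrightarrow> s t) (at_left t)"
    using DERIV_isCont[OF s_deriv_at[OF t]] by (simp add: isCont_def filterlim_at_split)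
  have "eventually (\<lambda>x. 0 \<le> s x) (at_left t)" "eventually (\<lambda>x. s x \<le> s_in) (at_left t)"
    using left by (auto elim: eventually_mono)
  then have s_bounds: "0 \<le> s t" "s t \<le> s_in"
    using tendsto_lowerbound[OF lim] tendsto_upperbound[OF lim]
    by auto
  have "b 0 \<le> b t * exp (Dmax * t)"
  proof (rule b_growth_bound[OF \<open>0 \<le> t\<close>])
    fix x assume "0 < x" "x < t"
    then show "0 \<le> s x \<and> s x \<le> s_in \<and> 0 \<le> b x" using before[of x] by auto
  qed
  then have b_pos: "0 < b t" using initial(3) by (smt (verit) exp_gt_zero mult_nonpos_nonneg)
  have "s t \<noteq> s_in"
  proof
    assume at_top_level: "s t = s_in"
    then have "s_rate t < 0" using mu_s_in_pos b_pos by (simp add: s_rate_def)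
    from DERIV_neg_dec_left[OF s_deriv_at[OF t] this] obtain d where
      d: "d > 0" "\<forall>h>0. h < d \<longrightarrow> s t < s (t - h)" by blast
    define h where "h = min (d / 2) (t / 2)"
    have "s_in < s (t - h)" using d at_top_level t unfolding h_def by auto
    moreover have "s (t - h) < s_in" using before[of "t - h"] d t unfolding h_def by auto
    ultimately show False by simp
  qed
  then show ?thesis using s_bounds b_pos by simp
qed (use initial in simp)

text \<open>The physical region persists for a short time: strict bounds by continuity, and at
  \<open>s = 0\<close> the inflow gives \<open>s' = D(0) s_in > 0\<close>.\<close>
lemma state_extends:
  assumes "0 \<le> t" and physical: "0 \<le> s t \<and> s t < s_in \<and> 0 < b t"
  shows "eventually (\<lambda>x. 0 \<le> s x \<and> s x < s_in \<and> 0 < b x) (at_right t)"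
proof -
  have s_lim: "(s \<longlongrightarrow> s t) (at_right t)" and b_lim: "(b \<longlongrightarrow> b t) (at_right t)"
    using s_cont b_cont \<open>0 \<le> t\<close> unfolding continuous_on_eq_continuous_within continuous_within
    by (auto intro: tendsto_within_subset)
  have strict: "eventually (\<lambda>x. s x < s_in \<and> 0 < b x) (at_right t)"
    using eventually_conj[OF order_tendstoD(2)[OF s_lim] order_tendstoD(1)[OF b_lim]] physical
    by blast
  have "eventually (\<lambda>x. 0 \<le> s x) (at_right t)"
  proof (cases "s t = 0")
    case True
    then have "0 < - mu (s t) * b t + D (s t) * (s_in - s t)"
      using mu_0 Dmin_pos D_lower[of 0] s_in_pos by simp
    from has_real_derivative_pos_inc_right[OF s_deriv[OF \<open>0 \<le> t\<close>] this] obtain d where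
      d: "d > 0" "\<forall>h>0. t + h \<in> {0..} \<longrightarrow> h < d \<longrightarrow> s t < s (t + h)" by blast
    have "eventually (\<lambda>x. x \<in> {t<..<t + d}) (at_right t)"
      using eventually_at_right_real d by simp
    then show ?thesis
      by eventually_elim (use d(2)[rule_format, of "_ - t"] True \<open>0 \<le> t\<close> in force)
  next
    case False
    then show ?thesis
      using order_tendstoD(1)[OF s_lim, of 0] physical by (auto elim: eventually_mono)
  qed
  then show ?thesis using strict by eventually_elim auto
qed

lemma invariant: "0 \<le> t \<Longrightarrow> 0 \<le> s t \<and> s t < s_in \<and> 0 < b t"
  by (rule first_exit_induction[where P = "\<lambda>t. 0 \<le> s t \<and> s t < s_in \<and> 0 < b t",
        OF state_closed state_extends])

text \<open>Since \<open>D \<ge> Dmin\<close>, \<open>w^2 e^{2 Dmin t}\<close> is nonincreasing for \<open>w = excess\<close>.\<close>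
lemma excess_decay:
  assumes "0 \<le> t"
  shows "\<bar>excess t\<bar> \<le> \<bar>excess 0\<bar> * exp (- Dmin * t)"
proof -
  define g where "g x = excess x ^ 2 * exp (2 * Dmin * x)" for x
  have "- g 0 \<le> - g t"
  proof (rule DERIV_nonneg_imp_increasing_open[OF \<open>0 \<le> t\<close>])
    fix x :: real assume x: "0 < x" "x < t"
    have "((\<lambda>x. - g x) has_real_derivative
        2 * excess x ^ 2 * exp (2 * Dmin * x) * (D (s x) - Dmin)) (at x)"
      unfolding g_def excess_def
      by (rule derivative_eq_intros s_deriv_at[OF x(1)] b_deriv_at[OF x(1)] refl)+
        (simp add: s_rate_def algebra_simps power2_eq_square)
    moreover have "0 \<le> 2 * excess x ^ 2 * exp (2 * Dmin * x) * (D (s x) - Dmin)"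
      using D_lower[of "s x"] by simp
    ultimately show "\<exists>y. ((\<lambda>x. - g x) has_real_derivative y) (at x) \<and> 0 \<le> y"
      by blast
  next
    show "continuous_on {0..t} (\<lambda>x. - g x)"
      using continuous_on_subset[OF b_cont] continuous_on_subset[OF s_cont]
      unfolding g_def excess_def by (auto intro!: continuous_intros)
  qed
  then have "excess t ^ 2 * exp (2 * Dmin * t) \<le> excess 0 ^ 2" by (simp add: g_def)
  then have "excess t ^ 2 \<le> excess 0 ^ 2 * exp (- (2 * Dmin * t))"
    by (simp add: exp_minus field_simps)
  also have "\<dots> = (\<bar>excess 0\<bar> * exp (- Dmin * t)) ^ 2"
  proof -
    have "exp (- (2 * Dmin * t)) = exp (- Dmin * t) ^ 2" by (simp add: power2_eq_square flip: exp_add)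
    then show ?thesis by (simp add: power_mult_distrib)
  qed
  finally show ?thesis by (rule power2_le_imp_le[of "\<bar>excess t\<bar>", simplified]) simp
qed

lemma excess_tendsto_zero: "(excess \<longlongrightarrow> 0) at_top"
proof (rule Lim_null_comparison)
  show "eventually (\<lambda>t. norm (excess t) \<le> \<bar>excess 0\<bar> * exp (- Dmin * t)) at_top"
    using eventually_ge_at_top[of "0::real"] by eventually_elim (use excess_decay in auto)
  show "((\<lambda>t. \<bar>excess 0\<bar> * exp (- Dmin * t)) \<longlongrightarrow> 0) at_top"
    using Dmin_pos by (intro tendsto_mult_right_zero) real_asymp
qed

lemma b_bounded:
  assumes "0 \<le> t"
  shows "b t \<le> s_in + \<bar>excess 0\<bar>"
proof -
  have "exp (- Dmin * t) \<le> 1" using Dmin_pos assms by simp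
  then have "\<bar>excess t\<bar> \<le> \<bar>excess 0\<bar>"
    using excess_decay[OF assms] by (meson abs_ge_zero mult_left_le order_trans)
  then show ?thesis using invariant[OF assms] unfolding excess_def by linarith
qed

lemma eventually_small_perturbation:
  assumes "0 < \<epsilon>"
  shows "\<exists>T\<ge>1. \<forall>t\<ge>T. \<bar>mu (s t) * excess t\<bar> < \<epsilon>"
proof -
  obtain M where M: "0 < M" "\<forall>x\<in>{0..s_in}. mu x \<le> M" using mu_bounded by blast
  have "((\<lambda>t. \<bar>excess t\<bar>) \<longlongrightarrow> 0) at_top"
    using tendsto_rabs[OF excess_tendsto_zero] by simp
  then have "eventually (\<lambda>t. \<bar>excess t\<bar> < \<epsilon> / M) at_top"
    using order_tendstoD(2)[OF _ divide_pos_pos[OF assms M(1)]] by blast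
  then obtain T where T: "\<forall>t\<ge>T. \<bar>excess t\<bar> < \<epsilon> / M" by (auto simp: eventually_at_top_linorder)
  have "\<bar>mu (s t) * excess t\<bar> < \<epsilon>" if "max T 1 \<le> t" for t
  proof -
    have st: "0 \<le> s t" "s t \<le> s_in" using invariant[of t] that by auto
    have "\<bar>mu (s t) * excess t\<bar> = mu (s t) * \<bar>excess t\<bar>" using mu_nonneg[OF st] by (simp add: abs_mult)
    also have "\<dots> \<le> M * \<bar>excess t\<bar>" using M(2) st by (intro mult_right_mono) auto
    also have "\<dots> < M * (\<epsilon> / M)" using T that M(1) by (intro mult_strict_left_mono) auto
    finally show ?thesis using M(1) by simp
  qed
  then show ?thesis by (intro exI[of _ "max T 1"]) auto
qed

lemma rate_gap_continuous: "continuous_on {0..s_in} (\<lambda>x. D x - mu x)"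
  using D_cont mu_cont by (rule continuous_on_diff)

subsection \<open>Attraction towards a sign change of \<open>D - mu\<close>\<close>

text \<open>Where washout exceeds growth on \<open>[0,a]\<close>, the substrate is pushed above \<open>a\<close>: once the
  perturbation is small, \<open>s' \<ge> c > 0\<close> whenever \<open>s \<le> a\<close>, so \<open>s\<close> exceeds \<open>a\<close> (it is bounded)
  and then never returns below \<open>a\<close>.\<close>
lemma eventually_above:
  assumes "0 \<le> a" "a < s_in" and washout: "\<And>x. 0 \<le> x \<Longrightarrow> x \<le> a \<Longrightarrow> mu x < D x"
  shows "eventually (\<lambda>t. a \<le> s t) at_top"
proof -
  have "\<exists>d>0. \<forall>x\<in>{0..a}. d \<le> D x - mu x"
    using assms by (intro compact_pos_uniform compact_Icc
        continuous_on_subset[OF rate_gap_continuous]) auto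
  then obtain d where d: "0 < d" "\<And>x. 0 \<le> x \<Longrightarrow> x \<le> a \<Longrightarrow> d \<le> D x - mu x" by auto
  define c where "c = d * (s_in - a) / 2"
  have c: "0 < c" using d assms unfolding c_def by simp
  obtain T where T: "1 \<le> T" "\<And>t. T \<le> t \<Longrightarrow> \<bar>mu (s t) * excess t\<bar> < c"
    using eventually_small_perturbation[OF c] by blast
  have pos: "0 < t" if "T \<le> t" for t using T(1) that by linarith
  have rate: "c \<le> s_rate t" if "T \<le> t" "s t \<le> a" for t
  proof -
    have "0 \<le> s t" using invariant[of t] pos[OF that(1)] by auto
    then have gap: "d \<le> D (s t) - mu (s t)" using d(2) that(2) by blast
    then have "d * (s_in - a) \<le> (D (s t) - mu (s t)) * (s_in - s t)"
      using d(1) that(2) assms(2) by (intro mult_mono) auto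
    then show ?thesis using T(2)[OF that(1)] unfolding s_rate_excess c_def abs_less_iff by linarith
  qed
  have "\<not> (\<forall>t\<ge>T. s t \<le> a)"
  proof
    assume stuck: "\<forall>t\<ge>T. s t \<le> a"
    have "\<not> (\<forall>t\<ge>T. s t \<le> s_in)"
      by (rule unbounded_of_deriv_ge[OF s_deriv_at[OF pos] rate c]) (use stuck in auto)
    moreover have "\<forall>t\<ge>T. s t \<le> s_in" using invariant pos by (meson less_imp_le)
    ultimately show False by blast
  qed
  then obtain t0 where t0: "T \<le> t0" "a < s t0" by (auto simp: not_le)
  have "a \<le> s t" if "t0 \<le> t" for t
  proof (rule barrier_low[of t0 s s_rate "a - 1" a t])
    show "(s has_real_derivative s_rate x) (at x)" if "t0 < x" for x
      using s_deriv_at pos t0(1) that by simp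
    show "continuous_on {t0..} s"
      using pos[OF t0(1)] by (intro continuous_on_subset[OF s_cont]) auto
    show "0 < s_rate x" if "t0 < x" "a - 1 < s x" "s x < a" for x
      using rate[of x] t0(1) that c by simp
  qed (use t0 that in auto)
  then show ?thesis by (auto simp: eventually_at_top_linorder)
qed

text \<open>Where growth exceeds washout on \<open>[a,s_in]\<close>, the substrate is pushed below \<open>a\<close>: staying
  above \<open>a\<close> forever would make \<open>ln b\<close> grow linearly although \<open>b\<close> is bounded, and in the band
  \<open>(a, a + h)\<close>, \<open>h = (s_in - a)/2\<close>, the substrate decreases once the perturbation is small.\<close>
lemma eventually_below:
  assumes "0 \<le> a" "a < s_in" and growth: "\<And>x. a \<le> x \<Longrightarrow> x \<le> s_in \<Longrightarrow> D x < mu x"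
  shows "eventually (\<lambda>t. s t \<le> a) at_top"
proof -
  have "\<exists>d>0. \<forall>x\<in>{a..s_in}. d \<le> - (D x - mu x)"
    using assms by (intro compact_pos_uniform compact_Icc continuous_on_minus
        continuous_on_subset[OF rate_gap_continuous]) auto
  then obtain d where d: "0 < d" "\<And>x. a \<le> x \<Longrightarrow> x \<le> s_in \<Longrightarrow> d \<le> mu x - D x" by force
  define h where "h = (s_in - a) / 2"
  define c where "c = d * h / 2"
  have h: "0 < h" and c: "0 < c" using d assms unfolding c_def h_def by auto
  obtain T where T: "1 \<le> T" "\<And>t. T \<le> t \<Longrightarrow> \<bar>mu (s t) * excess t\<bar> < c"
    using eventually_small_perturbation[OF c] by blast
  have pos: "0 < t" if "T \<le> t" for t using T(1) that by linarith
  have "\<not> (\<forall>t\<ge>T. a \<le> s t)"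
  proof
    assume stuck: "\<forall>t\<ge>T. a \<le> s t"
    have ln_deriv: "((\<lambda>t. ln (b t)) has_real_derivative mu (s t) - D (s t)) (at t)"
      if "T \<le> t" for t
    proof -
      have b_pos: "0 < b t" using invariant[of t] pos[OF that] by auto
      have "((\<lambda>t. ln (b t)) has_real_derivative
          inverse (b t) * (mu (s t) * b t - D (s t) * b t)) (at t)"
        by (rule DERIV_chain2[OF DERIV_ln[OF b_pos] b_deriv_at[OF pos[OF that]]])
      moreover have "inverse (b t) * (mu (s t) * b t - D (s t) * b t) = mu (s t) - D (s t)"
        using b_pos by (simp add: field_simps)
      ultimately show ?thesis by simp
    qed
    have ln_rate: "d \<le> mu (s t) - D (s t)" if "T \<le> t" for t
      using d(2) stuck invariant[of t] pos[OF that] that by (simp add: less_imp_le)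
    have "\<not> (\<forall>t\<ge>T. ln (b t) \<le> ln (s_in + \<bar>excess 0\<bar>))"
      by (rule unbounded_of_deriv_ge[OF ln_deriv ln_rate d(1)])
    moreover have "\<forall>t\<ge>T. ln (b t) \<le> ln (s_in + \<bar>excess 0\<bar>)"
    proof (intro allI impI)
      fix t assume "T \<le> t"
      then have "0 < b t" "b t \<le> s_in + \<bar>excess 0\<bar>"
        using invariant[of t] b_bounded[of t] pos by (auto simp: less_imp_le)
      then show "ln (b t) \<le> ln (s_in + \<bar>excess 0\<bar>)" by simp
    qed
    ultimately show False by blast
  qed
  then obtain t1 where t1: "T \<le> t1" "s t1 < a" by (auto simp: not_le)
  have decreasing: "s_rate t < 0" if "T \<le> t" "a < s t" "s t < a + h" for t
  proof -
    have "a \<le> s t" "s t \<le> s_in" using that(2,3) assms(2) unfolding h_def by (simp_all add: field_simps)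
    then have gap: "d \<le> mu (s t) - D (s t)" using d(2) by blast
    moreover have "h \<le> s_in - s t" using that(3) unfolding h_def by (simp add: field_simps)
    ultimately have "d * h \<le> (mu (s t) - D (s t)) * (s_in - s t)"
      using d(1) h by (intro mult_mono) auto
    moreover have "(D (s t) - mu (s t)) * (s_in - s t) = - ((mu (s t) - D (s t)) * (s_in - s t))"
      by (simp add: algebra_simps)
    ultimately show ?thesis using T(2)[OF that(1)] c
      unfolding s_rate_excess c_def abs_less_iff by linarith
  qed
  have "s t \<le> a" if "t1 \<le> t" for t
  proof (rule barrier_up[of t1 s s_rate a "a + h" t])
    show "(s has_real_derivative s_rate x) (at x)" if "t1 < x" for x
      using s_deriv_at pos t1(1) that by simp
    show "continuous_on {t1..} s"
      using pos[OF t1(1)] by (intro continuous_on_subset[OF s_cont]) auto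
    show "s_rate x < 0" if "t1 < x" "a < s x" "s x < a + h" for x
      using decreasing t1(1) that by simp
  qed (use t1 h that in auto)
  then show ?thesis by (auto simp: eventually_at_top_linorder)
qed

lemma tendsto_crossing:
  assumes "0 < \<sigma>" "\<sigma> < s_in"
    and left: "\<And>x. 0 \<le> x \<Longrightarrow> x < \<sigma> \<Longrightarrow> mu x < D x"
    and right: "\<And>x. \<sigma> < x \<Longrightarrow> x \<le> s_in \<Longrightarrow> D x < mu x"
  shows "(s \<longlongrightarrow> \<sigma>) at_top"
  unfolding tendsto_iff
proof (intro allI impI)
  fix e :: real assume "0 < e"
  define \<delta> where "\<delta> = min (e / 2) (min (\<sigma> / 2) ((s_in - \<sigma>) / 2))"
  have "0 < \<delta>" using \<open>0 < e\<close> assms(1,2) unfolding \<delta>_def by simp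
  moreover have "\<delta> \<le> e / 2" "\<delta> \<le> \<sigma> / 2" "\<delta> \<le> (s_in - \<sigma>) / 2"
    unfolding \<delta>_def by (rule min.cobounded1 order_trans[OF min.cobounded2 min.cobounded1]
        order_trans[OF min.cobounded2 min.cobounded2])+
  ultimately have \<delta>: "0 < \<delta>" "\<delta> < e" "\<delta> < \<sigma>" "\<sigma> + \<delta> < s_in"
    using \<open>0 < e\<close> assms(1,2) by (simp_all add: field_simps)
  have "eventually (\<lambda>t. \<sigma> - \<delta> \<le> s t) at_top"
    using \<delta> by (intro eventually_above left) auto
  moreover have "eventually (\<lambda>t. s t \<le> \<sigma> + \<delta>) at_top"
    using \<delta> by (intro eventually_below right) auto
  ultimately show "eventually (\<lambda>t. dist (s t) \<sigma> < e) at_top"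
    by eventually_elim (use \<delta> in \<open>auto simp: dist_real_def\<close>)
qed

text \<open>Conversely, an interior limit of \<open>s\<close> is an equilibrium: the substrate rate converges to
  \<open>(D(\<sigma>) - mu(\<sigma>)) (s_in - \<sigma>)\<close>, which must vanish because \<open>s\<close> is bounded.\<close>
lemma limit_is_equilibrium:
  assumes lim: "(s \<longlongrightarrow> \<sigma>) at_top" and "0 < \<sigma>" "\<sigma> < s_in"
  shows "D \<sigma> = mu \<sigma>"
proof -
  have interior: "\<sigma> \<in> interior {0..s_in}" using assms(2,3) by simp
  have mu_lim: "((\<lambda>t. mu (s t)) \<longlongrightarrow> mu \<sigma>) at_top"
    using isCont_tendsto_compose[OF continuous_on_interior[OF mu_cont interior] lim] .
  have D_lim: "((\<lambda>t. D (s t)) \<longlongrightarrow> D \<sigma>) at_top"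
    using isCont_tendsto_compose[OF continuous_on_interior[OF D_cont interior] lim] .
  have "((\<lambda>t. excess t + s_in - s t) \<longlongrightarrow> 0 + s_in - \<sigma>) at_top"
    by (intro tendsto_diff tendsto_add excess_tendsto_zero tendsto_const lim)
  then have b_lim: "(b \<longlongrightarrow> s_in - \<sigma>) at_top" by (simp add: excess_def)
  have "(s_rate \<longlongrightarrow> - mu \<sigma> * (s_in - \<sigma>) + D \<sigma> * (s_in - \<sigma>)) at_top"
    unfolding s_rate_def[abs_def]
    by (intro tendsto_add tendsto_mult tendsto_minus tendsto_diff tendsto_const mu_lim D_lim b_lim lim)
  moreover have "\<bar>s t\<bar> \<le> s_in" if "1 \<le> t" for t using invariant[of t] that by auto
  ultimately have "- mu \<sigma> * (s_in - \<sigma>) + D \<sigma> * (s_in - \<sigma>) = 0"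
    using deriv_limit_zero_if_bounded[of 1 s s_rate] s_deriv_at by force
  then have "(D \<sigma> - mu \<sigma>) * (s_in - \<sigma>) = 0" by (simp add: algebra_simps)
  then show ?thesis using assms(3) by simp
qed

end

section \<open>The saturated proportional feedback\<close>

lemma sat_clamp: "Dmin \<le> Dmax \<Longrightarrow> sat Dmin Dmax x = max Dmin (min Dmax x)"
  unfolding sat_def by auto

lemma feedback_clamp:
  "Dmin \<le> Dmax \<Longrightarrow>
    feedback Dmin Dmax G1 sbar Dbar x = max Dmin (min Dmax (Dbar - G1 * (x - sbar)))"
  unfolding feedback_def by (rule sat_clamp)

lemma feedback_at_setpoint:
  "Dbar \<in> {Dmin..Dmax} \<Longrightarrow> feedback Dmin Dmax G1 sbar Dbar sbar = Dbar"
  by (auto simp: feedback_clamp)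

text \<open>With \<open>G1 > - min mu'\<close> the function \<open>x \<mapsto> mu x + G1 x\<close> is strictly increasing; this is
  what makes the setpoint the only place where the feedback rate can meet \<open>mu\<close>.\<close>
lemma shifted_growth_strict_mono:
  fixes mu mu' :: "real \<Rightarrow> real"
  assumes mu_deriv: "\<forall>x\<in>{0..s_in}. (mu has_real_derivative mu' x) (at x within {0..s_in})"
    and mu'_cont: "continuous_on {0..s_in} mu'"
    and gain: "G1 > - (INF x\<in>{0..s_in}. mu' x)"
    and "0 \<le> x" "x < y" "y \<le> s_in"
  shows "mu x + G1 * x < mu y + G1 * y"
proof (rule DERIV_pos_imp_increasing_open[OF \<open>x < y\<close>])
  have bdd: "bdd_below (mu' ` {0..s_in})"
    using compact_continuous_image[OF mu'_cont compact_Icc]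
    by (intro bounded_imp_bdd_below compact_imp_bounded)
  fix z assume z: "x < z" "z < y"
  have "(mu has_real_derivative mu' z) (at z within {0..s_in})" using mu_deriv z assms(4-6) by auto
  moreover have "at z within {0..s_in} = at z" using z assms(4-6) by (intro at_within_Icc_at) auto
  ultimately have "(mu has_real_derivative mu' z) (at z)" by simp
  moreover have "(INF x\<in>{0..s_in}. mu' x) \<le> mu' z"
    using z assms(4-6) by (intro cInf_lower bdd) auto
  ultimately show "\<exists>l. ((\<lambda>t. mu t + G1 * t) has_real_derivative l) (at z) \<and> 0 < l"
    using gain by (intro exI[of _ "mu' z + G1"]) (auto intro!: derivative_eq_intros)
next
  have "continuous_on {0..s_in} mu"
    using mu_deriv by (intro DERIV_continuous_on) auto
  then show "continuous_on {x..y} (\<lambda>t. mu t + G1 * t)"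
    using assms(4-6) by (auto intro!: continuous_intros elim: continuous_on_subset)
qed

text \<open>Below the setpoint the feedback rate exceeds the growth rate (either it saturates at
  \<open>Dmax > mu\<close>, or it equals \<open>mu(sbar) + G1 (sbar - x) > mu(x)\<close> by monotonicity).\<close>
lemma feedback_exceeds_growth_below:
  assumes "Dmin \<le> Dmax" "Dbar \<in> {Dmin..Dmax}" "0 < G1" "Dbar = mu sbar"
    and Dmax_mu: "mu x < Dmax"
    and shifted_mono: "mu x + G1 * x < mu sbar + G1 * sbar" and "x < sbar"
  shows "mu x < feedback Dmin Dmax G1 sbar Dbar x"
proof -
  have "G1 * (x - sbar) < 0" using assms(3,7) by (intro mult_pos_neg) auto
  then have "Dbar \<le> Dbar - G1 * (x - sbar)" by simp
  then have "feedback Dmin Dmax G1 sbar Dbar x = min Dmax (Dbar - G1 * (x - sbar))"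
    using assms(1,2) by (auto simp: feedback_clamp)
  then show ?thesis using Dmax_mu shifted_mono assms(4) by (simp add: algebra_simps)
qed

lemma growth_exceeds_feedback_above:
  assumes "Dmin \<le> Dmax" "Dbar \<in> {Dmin..Dmax}" "0 < G1" "Dbar = mu sbar"
    and Dmin_mu: "Dmin < mu x"
    and shifted_mono: "mu sbar + G1 * sbar < mu x + G1 * x" and "sbar < x"
  shows "feedback Dmin Dmax G1 sbar Dbar x < mu x"
proof -
  have "Dbar - G1 * (x - sbar) \<le> Dbar" using assms(3,7) by simp
  then have "feedback Dmin Dmax G1 sbar Dbar x = max Dmin (Dbar - G1 * (x - sbar))"
    using assms(1,2) by (auto simp: feedback_clamp)
  then show ?thesis using Dmin_mu shifted_mono assms(4) by (simp add: algebra_simps)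
qed

theorem mainTheorem2:
  fixes mu mu' :: "real \<Rightarrow> real"
    and s_in s_min Dmin Dmax G1 sbar Dbar :: real
    and s b :: "real \<Rightarrow> real"
  assumes s_in_pos: "s_in > 0"
    and s_min: "0 < s_min" "s_min < s_in"
    and D_bounds: "0 < Dmin" "Dmin < Dmax"
    and G1_pos: "G1 > 0"
    and mu_deriv: "\<forall>x\<in>{0..s_in}. (mu has_real_derivative mu' x) (at x within {0..s_in})"
    and mu'_cont: "continuous_on {0..s_in} mu'"
    and mu_nonneg: "\<forall>x\<in>{0..s_in}. mu x \<ge> 0"
    and mu_0: "mu 0 = 0"
    and mu_pos: "\<forall>x\<in>{0<..s_in}. mu x > 0"
    and Dmin_mu: "\<forall>x\<in>{s_min..s_in}. Dmin < mu x"
    and Dmax_mu: "\<forall>x\<in>{0..s_in}. mu x < Dmax"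
    and G1_deriv: "G1 > - (INF x\<in>{0..s_in}. mu' x)"
    and sbar: "sbar \<in> {s_min..<s_in}"
    and Dbar: "Dbar \<in> {Dmin..Dmax}"
    and G1_Dbar: "G1 > - (mu s_in - Dbar) / (s_in - sbar)"
    and sol: "closed_loop_sol mu s_in Dmin Dmax G1 sbar Dbar s b"
  shows "Dbar = mu sbar \<longleftrightarrow> (s \<longlongrightarrow> sbar) at_top"
proof -
  let ?D = "feedback Dmin Dmax G1 sbar Dbar"
  interpret chemostat mu ?D s_in Dmin Dmax s b
  proof
    show "continuous_on {0..s_in} mu" using mu_deriv by (intro DERIV_continuous_on) auto
    show "continuous_on {0..s_in} ?D"
      using D_bounds by (auto simp: feedback_clamp intro!: continuous_intros)
  qed (use assms in \<open>auto simp: closed_loop_sol_def feedback_clamp\<close>)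
  have shifted_mono: "\<And>x y. 0 \<le> x \<Longrightarrow> x < y \<Longrightarrow> y \<le> s_in \<Longrightarrow> mu x + G1 * x < mu y + G1 * y"
    using shifted_growth_strict_mono[OF mu_deriv mu'_cont G1_deriv] .
  have sbar_pos: "0 < sbar" "sbar < s_in" using sbar s_min by auto
  show ?thesis
  proof
    assume setpoint: "Dbar = mu sbar"
    show "(s \<longlongrightarrow> sbar) at_top"
    proof (rule tendsto_crossing[OF sbar_pos])
      show "\<And>x. 0 \<le> x \<Longrightarrow> x < sbar \<Longrightarrow> mu x < ?D x"
        using feedback_exceeds_growth_below setpoint Dmax_mu shifted_mono sbar_pos
          D_bounds Dbar G1_pos by simp
      show "\<And>x. sbar < x \<Longrightarrow> x \<le> s_in \<Longrightarrow> ?D x < mu x"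
        using growth_exceeds_feedback_above setpoint Dmin_mu shifted_mono sbar sbar_pos
          D_bounds Dbar G1_pos by simp
    qed
  next
    assume "(s \<longlongrightarrow> sbar) at_top"
    then have "?D sbar = mu sbar" using limit_is_equilibrium sbar_pos by blast
    then show "Dbar = mu sbar" using feedback_at_setpoint[OF Dbar] by simp
  qed
qed

end
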